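(* Let $0<\beta<\mu$ and $0<v_0<x_0$, and set $V(s)=v_0e^{\beta s}$. For $t>0$ let $$x_t(s)=\frac{v_0e^{\beta t}\sinh(\mu s)+x_0\sinh(\mu(t-s))}{\sinh(\mu t)},\qquad s\ge0,$$ (so $x_t(0)=x_0$, $x_t(t)=V(t)$). Define $$\phi_2(s)=\Big(1-\frac{\beta}{\mu}\Big)e^{(\beta+\mu)s}+\Big(1+\frac{\beta}{\mu}\Big)e^{(\beta-\mu)s}.$$ Then the equation $\phi_2(t)=2x_0/v_0$ has a unique positive solution $t_2$, and $$\operatorname{sgn}\big(x_t'(t)-V'(t)\big)=\begin{cases}-1 & t<t_2,\\ 0 & t=t_2,\\ +1 & t>t_2.\end{cases}$$ Moreover $t_1<t^o_V<t_2$, where $t_1=\frac{1}{\mu+\beta}\log\frac{x_0}{v_0}$ and $t^o_V$ is the unique positive solution of $\big(1-\frac{\beta}{\mu}\big)e^{(\mu+\beta)t}+\frac{\beta}{\mu}e^{(\beta-\mu)t}=\frac{x_0}{v_0}$.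
   Context: $x_t'(t)$ denotes the derivative of $s\mapsto x_t(s)$ evaluated at $s=t$. *)

theory Defs
  imports "HOL-Analysis.Analysis"
begin

definition Vfun :: "real \<Rightarrow> real \<Rightarrow> real \<Rightarrow> real" where
  "Vfun v0 \<beta> s = v0 * exp (\<beta> * s)"

definition xt :: "real \<Rightarrow> real \<Rightarrow> real \<Rightarrow> real \<Rightarrow> real \<Rightarrow> real \<Rightarrow> real" where
  "xt \<beta> \<mu> v0 x0 t s =
     (v0 * exp (\<beta> * t) * sinh (\<mu> * s) + x0 * sinh (\<mu> * (t - s))) / sinh (\<mu> * t)"

definition phi2 :: "real \<Rightarrow> real \<Rightarrow> real \<Rightarrow> real" where
  "phi2 \<beta> \<mu> s = (1 - \<beta>/\<mu>) * exp ((\<beta> + \<mu>) * s) + (1 + \<beta>/\<mu>) * exp ((\<beta> - \<mu>) * s)"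

definition phiV :: "real \<Rightarrow> real \<Rightarrow> real \<Rightarrow> real" where
  "phiV \<beta> \<mu> t = (1 - \<beta>/\<mu>) * exp ((\<mu> + \<beta>) * t) + (\<beta>/\<mu>) * exp ((\<beta> - \<mu>) * t)"

end

(*
  Both phi2 and phiV have the shape a exp(p s) + b exp(q s) with a, p > 0, b >= 0, q <= 0 and
  a p + b q >= 0; the derivative of such a function exceeds a p + b q on (0, oo), so it is
  strictly increasing and unbounded on [0, oo), which yields the unique positive solutions.
  Since exp(beta t) (cosh(mu t) - beta/mu sinh(mu t)) = phi2(t)/2, differentiating x_t at s = t
  gives x_t'(t) - V'(t) = mu / sinh(mu t) * (v0/2 phi2(t) - x0), whose sign is that of
  phi2(t) - phi2(t2). Finally phiV(t1) < x0/v0 = phi2(t2)/2 < phiV(t2), so monotonicity of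
  phiV places its root strictly between t1 and t2.
*)
theory Submission
  imports Defs
begin

lemma strict_mono_on_exp_combination:
  fixes a b p q :: real
  assumes "0 < a" "0 < p" "0 \<le> b" "q \<le> 0" "0 \<le> a * p + b * q"
  shows "strict_mono_on {0..} (\<lambda>s. a * exp (p * s) + b * exp (q * s))"
proof (rule strict_mono_onI)
  fix x y :: real assume "x \<in> {0..}" "x < y"
  then show "a * exp (p * x) + b * exp (q * x) < a * exp (p * y) + b * exp (q * y)"
  proof (intro DERIV_pos_imp_increasing_open[OF \<open>x < y\<close>] exI conjI)
    fix u assume "x < u"
    with \<open>x \<in> {0..}\<close> have "0 < u" by simp
    show "((\<lambda>s. a * exp (p * s) + b * exp (q * s)) has_real_derivative
            a * p * exp (p * u) + b * q * exp (q * u)) (at u)"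
      by (auto intro!: derivative_eq_intros)
    have "a * p < a * p * exp (p * u)"
      using \<open>0 < u\<close> assms by simp
    moreover have "b * q \<le> b * q * exp (q * u)"
      using mult_left_mono_neg[of "exp (q * u)" 1 "b * q"] \<open>0 < u\<close> assms
      by (simp add: mult_nonneg_nonpos mult_nonpos_nonneg)
    ultimately show "0 < a * p * exp (p * u) + b * q * exp (q * u)"
      using assms(5) by linarith
  qed (intro continuous_intros)
qed

lemma filterlim_exp_combination_at_top:
  fixes a b p q :: real
  assumes "0 < a" "0 < p" "0 \<le> b"
  shows "filterlim (\<lambda>s. a * exp (p * s) + b * exp (q * s)) at_top at_top"
proof (rule filterlim_at_top_mono)
  have "filterlim (\<lambda>s. p * s) at_top at_top"
    using \<open>0 < p\<close> by (intro filterlim_tendsto_pos_mult_at_top[OF tendsto_const] filterlim_ident)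
  then have "filterlim (\<lambda>s. exp (p * s)) at_top at_top"
    by (rule filterlim_compose[OF exp_at_top])
  then show "filterlim (\<lambda>s. a * exp (p * s)) at_top at_top"
    using \<open>0 < a\<close> by (intro filterlim_tendsto_pos_mult_at_top[OF tendsto_const])
  show "\<forall>\<^sub>F s in at_top. a * exp (p * s) \<le> a * exp (p * s) + b * exp (q * s)"
    using \<open>0 \<le> b\<close> by simp
qed

lemma ex1_pos_solution_strict_mono_on:
  fixes f :: "real \<Rightarrow> real"
  assumes mono: "strict_mono_on {0..} f" and cont: "continuous_on {0..} f"
    and lim: "filterlim f at_top at_top" and "f 0 < c"
  shows "\<exists>!t. 0 < t \<and> f t = c"
proof -
  have "\<forall>\<^sub>F x in at_top. c \<le> f x \<and> 0 \<le> x"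
    using lim by (simp add: filterlim_at_top eventually_conj eventually_ge_at_top)
  then obtain T where "c \<le> f T" "0 \<le> T"
    unfolding eventually_at_top_linorder by blast
  moreover have "continuous_on {0..T} f"
    using cont by (rule continuous_on_subset) auto
  ultimately obtain t where "0 \<le> t" "f t = c"
    using IVT'[of f 0 c T] \<open>f 0 < c\<close> by force
  with \<open>f 0 < c\<close> have "0 < t \<and> f t = c"
    by (cases "t = 0") auto
  moreover have "s = t" if "0 < s" "f s = c" for s
    using strict_mono_on_eq[OF mono, of s t] that \<open>0 \<le> t\<close> \<open>f t = c\<close> by simp
  ultimately show ?thesis by blast
qed

lemma sgn_diff_strict_mono_on:
  fixes f :: "'a::linorder \<Rightarrow> real"
  assumes "strict_mono_on S f" "x \<in> S" "y \<in> S"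
  shows "sgn (f x - f y) = (if x < y then -1 else if x = y then 0 else 1)"
  using strict_mono_on_less[OF assms] strict_mono_on_less[OF assms(1,3,2)]
  by (cases x y rule: linorder_cases) auto

lemma strict_mono_on_phi2:
  assumes "0 < \<beta>" "\<beta> < \<mu>"
  shows "strict_mono_on {0..} (phi2 \<beta> \<mu>)"
  unfolding phi2_def[abs_def] using assms
  by (intro strict_mono_on_exp_combination) (auto simp: field_simps)

lemma strict_mono_on_phiV:
  assumes "0 < \<beta>" "\<beta> < \<mu>"
  shows "strict_mono_on {0..} (phiV \<beta> \<mu>)"
  unfolding phiV_def[abs_def] using assms
  by (intro strict_mono_on_exp_combination) (auto simp: field_simps)

lemma phi2_ex1_pos_solution:
  assumes "0 < \<beta>" "\<beta> < \<mu>" "2 < c"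
  shows "\<exists>!t. 0 < t \<and> phi2 \<beta> \<mu> t = c"
proof (rule ex1_pos_solution_strict_mono_on[OF strict_mono_on_phi2[OF assms(1,2)]])
  show "continuous_on {0..} (phi2 \<beta> \<mu>)"
    unfolding phi2_def by (intro continuous_intros)
  show "filterlim (phi2 \<beta> \<mu>) at_top at_top"
    unfolding phi2_def[abs_def] using assms
    by (intro filterlim_exp_combination_at_top) (auto simp: field_simps)
  show "phi2 \<beta> \<mu> 0 < c"
    using assms by (simp add: phi2_def)
qed

lemma phiV_ex1_pos_solution:
  assumes "0 < \<beta>" "\<beta> < \<mu>" "1 < c"
  shows "\<exists>!t. 0 < t \<and> phiV \<beta> \<mu> t = c"
proof (rule ex1_pos_solution_strict_mono_on[OF strict_mono_on_phiV[OF assms(1,2)]])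
  show "continuous_on {0..} (phiV \<beta> \<mu>)"
    unfolding phiV_def by (intro continuous_intros)
  show "filterlim (phiV \<beta> \<mu>) at_top at_top"
    unfolding phiV_def[abs_def] using assms
    by (intro filterlim_exp_combination_at_top) (auto simp: field_simps)
  show "phiV \<beta> \<mu> 0 < c"
    using assms by (simp add: phiV_def)
qed

lemma phi2_eq_cosh_sinh:
  "phi2 \<beta> \<mu> t = 2 * exp (\<beta> * t) * (cosh (\<mu> * t) - \<beta> / \<mu> * sinh (\<mu> * t))"
  unfolding phi2_def cosh_def sinh_def
  by (simp add: algebra_simps diff_divide_distrib flip: exp_add exp_diff)

lemma deriv_xt_at_endpoint:
  assumes "0 < \<mu>" "0 < t"
  shows "deriv (xt \<beta> \<mu> v0 x0 t) t = \<mu> * (v0 * exp (\<beta> * t) * cosh (\<mu> * t) - x0) / sinh (\<mu> * t)"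
proof (rule DERIV_imp_deriv)
  have "sinh (\<mu> * t) \<noteq> 0"
    using assms by simp
  then show "(xt \<beta> \<mu> v0 x0 t has_real_derivative
      \<mu> * (v0 * exp (\<beta> * t) * cosh (\<mu> * t) - x0) / sinh (\<mu> * t)) (at t)"
    unfolding xt_def[abs_def]
    by (auto intro!: derivative_eq_intros simp: field_simps)
qed

lemma deriv_Vfun: "deriv (Vfun v0 \<beta>) t = \<beta> * Vfun v0 \<beta> t"
  unfolding Vfun_def[abs_def]
  by (rule DERIV_imp_deriv) (auto intro!: derivative_eq_intros)

lemma deriv_xt_minus_deriv_Vfun:
  assumes "0 < \<mu>" "0 < t"
  shows "deriv (xt \<beta> \<mu> v0 x0 t) t - deriv (Vfun v0 \<beta>) t
    = \<mu> / sinh (\<mu> * t) * (v0 / 2 * phi2 \<beta> \<mu> t - x0)"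
  using assms
  by (simp add: deriv_xt_at_endpoint deriv_Vfun Vfun_def phi2_eq_cosh_sinh field_simps)

lemma phiV_less_at_log:
  assumes "0 < \<beta>" "\<beta> < \<mu>" "1 < c"
  shows "phiV \<beta> \<mu> (1 / (\<mu> + \<beta>) * ln c) < c"
proof -
  define t1 where "t1 = 1 / (\<mu> + \<beta>) * ln c"
  have "0 < t1"
    unfolding t1_def using assms by simp
  then have "exp ((\<beta> - \<mu>) * t1) < 1"
    using assms by (simp add: mult_neg_pos)
  then have "exp ((\<beta> - \<mu>) * t1) < c"
    using assms by linarith
  then have "\<beta> / \<mu> * exp ((\<beta> - \<mu>) * t1) < \<beta> / \<mu> * c"
    using assms by (intro mult_strict_left_mono) auto
  moreover have "exp ((\<mu> + \<beta>) * t1) = c"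
    unfolding t1_def using assms by simp
  ultimately show ?thesis
    unfolding t1_def[symmetric] phiV_def by (simp add: algebra_simps)
qed

lemma phi2_less_2_phiV:
  assumes "0 < \<beta>" "\<beta> < \<mu>" "0 < t"
  shows "phi2 \<beta> \<mu> t < 2 * phiV \<beta> \<mu> t"
proof -
  have "2 * phiV \<beta> \<mu> t - phi2 \<beta> \<mu> t
      = (1 - \<beta> / \<mu>) * (exp ((\<mu> + \<beta>) * t) - exp ((\<beta> - \<mu>) * t))"
    unfolding phi2_def phiV_def by (simp add: algebra_simps)
  moreover have "exp ((\<beta> - \<mu>) * t) < exp ((\<mu> + \<beta>) * t)"
    using assms by (simp add: mult_strict_right_mono)
  then have "0 < (1 - \<beta> / \<mu>) * (exp ((\<mu> + \<beta>) * t) - exp ((\<beta> - \<mu>) * t))"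
    using assms by (intro mult_pos_pos) auto
  ultimately show ?thesis
    by linarith
qed

lemma sgn_deriv_xt_minus_deriv_Vfun:
  assumes "0 < \<beta>" "\<beta> < \<mu>" "0 < v0"
    and "0 < t2" "phi2 \<beta> \<mu> t2 = 2 * x0 / v0" and "0 < t"
  shows "sgn (deriv (xt \<beta> \<mu> v0 x0 t) t - deriv (Vfun v0 \<beta>) t) =
    (if t < t2 then -1 else if t = t2 then 0 else 1)"
proof -
  have "deriv (xt \<beta> \<mu> v0 x0 t) t - deriv (Vfun v0 \<beta>) t
      = \<mu> / sinh (\<mu> * t) * (v0 / 2 * phi2 \<beta> \<mu> t - x0)"
    using assms by (intro deriv_xt_minus_deriv_Vfun) auto
  also have "v0 / 2 * phi2 \<beta> \<mu> t - x0 = v0 / 2 * (phi2 \<beta> \<mu> t - phi2 \<beta> \<mu> t2)"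
    using assms by (simp add: field_simps)
  finally have diff: "deriv (xt \<beta> \<mu> v0 x0 t) t - deriv (Vfun v0 \<beta>) t
      = \<mu> * v0 / (2 * sinh (\<mu> * t)) * (phi2 \<beta> \<mu> t - phi2 \<beta> \<mu> t2)"
    by simp
  have pos: "0 < \<mu> * v0 / (2 * sinh (\<mu> * t))"
    using assms by simp
  have "sgn (deriv (xt \<beta> \<mu> v0 x0 t) t - deriv (Vfun v0 \<beta>) t)
      = sgn (phi2 \<beta> \<mu> t - phi2 \<beta> \<mu> t2)"
    unfolding diff sgn_mult sgn_pos[OF pos] by simp
  also have "\<dots> = (if t < t2 then -1 else if t = t2 then 0 else 1)"
    using assms by (intro sgn_diff_strict_mono_on[OF strict_mono_on_phi2]) auto
  finally show ?thesis .
qed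

lemma phiV_solution_between:
  assumes "0 < \<beta>" "\<beta> < \<mu>" "1 < c"
    and "0 < t2" "phi2 \<beta> \<mu> t2 = 2 * c" and "0 < tV" "phiV \<beta> \<mu> tV = c"
  shows "1 / (\<mu> + \<beta>) * ln c < tV \<and> tV < t2"
proof
  have "0 < 1 / (\<mu> + \<beta>) * ln c"
    using assms by simp
  then show "1 / (\<mu> + \<beta>) * ln c < tV"
    using phiV_less_at_log[OF assms(1-3)] assms(6,7)
      strict_mono_on_less[OF strict_mono_on_phiV[OF assms(1,2)]] by fastforce
  show "tV < t2"
    using phi2_less_2_phiV[OF assms(1,2,4)] assms(4-7)
      strict_mono_on_less[OF strict_mono_on_phiV[OF assms(1,2)], of tV t2] by simp
qed

theorem proposition1:
  fixes \<beta> \<mu> v0 x0 :: real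
  assumes "0 < \<beta>" "\<beta> < \<mu>" "0 < v0" "v0 < x0"
  shows "(\<exists>!t2. 0 < t2 \<and> phi2 \<beta> \<mu> t2 = 2 * x0 / v0) \<and>
    (\<forall>t2 t. 0 < t2 \<and> phi2 \<beta> \<mu> t2 = 2 * x0 / v0 \<and> 0 < t \<longrightarrow>
           sgn (deriv (xt \<beta> \<mu> v0 x0 t) t - deriv (Vfun v0 \<beta>) t) =
             (if t < t2 then -1 else if t = t2 then 0 else 1)) \<and>
    (\<exists>!tV. 0 < tV \<and> phiV \<beta> \<mu> tV = x0 / v0) \<and>
    (\<forall>t2 tV. 0 < t2 \<and> phi2 \<beta> \<mu> t2 = 2 * x0 / v0 \<and>
           0 < tV \<and> phiV \<beta> \<mu> tV = x0 / v0 \<longrightarrow>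
           1 / (\<mu> + \<beta>) * ln (x0 / v0) < tV \<and> tV < t2)"
proof -
  have ratio: "1 < x0 / v0" "2 < 2 * x0 / v0"
    using assms by (simp_all add: field_simps)
  show ?thesis
  proof (intro conjI allI impI)
    show "\<exists>!t2. 0 < t2 \<and> phi2 \<beta> \<mu> t2 = 2 * x0 / v0"
      using assms ratio by (intro phi2_ex1_pos_solution) auto
    show "\<exists>!tV. 0 < tV \<and> phiV \<beta> \<mu> tV = x0 / v0"
      using assms ratio by (intro phiV_ex1_pos_solution) auto
  next
    fix t2 t :: real
    assume "0 < t2 \<and> phi2 \<beta> \<mu> t2 = 2 * x0 / v0 \<and> 0 < t"
    then show "sgn (deriv (xt \<beta> \<mu> v0 x0 t) t - deriv (Vfun v0 \<beta>) t) =
        (if t < t2 then -1 else if t = t2 then 0 else 1)"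
      using assms by (intro sgn_deriv_xt_minus_deriv_Vfun) auto
  next
    fix t2 tV :: real
    assume "0 < t2 \<and> phi2 \<beta> \<mu> t2 = 2 * x0 / v0 \<and> 0 < tV \<and> phiV \<beta> \<mu> tV = x0 / v0"
    then have "1 / (\<mu> + \<beta>) * ln (x0 / v0) < tV \<and> tV < t2"
      using assms ratio by (intro phiV_solution_between) auto
    then show "1 / (\<mu> + \<beta>) * ln (x0 / v0) < tV" "tV < t2"
      by auto
  qed
qed

end
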